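(* Let $d \ge 1$, $p \in [0,1/2)$, $\mathbf{x} \in \mathbb{R}^d$, $G > 0$, $\lambda > 0$. Let measurements $y_k = \langle \mathbf{x}, \mathbf{a}_k\rangle + \epsilon_k$ ($k = 0,1,\dots$) be given, where $\epsilon_k = \xi_k\nu_k$ with $\xi_k$ an indicator equal to $1$ with probability $p$, independent of all other variables, and $\nu_k$ arbitrary (possibly dependent on $\mathbf{x}$ and the measurement vectors). Let $\mathcal{F}_k$ be the $\sigma$-algebra generated by $\{\mathbf{a}_0,\epsilon_0\},\dots,\{\mathbf{a}_{k-1},\epsilon_{k-1}\}$, and assume each $\mathbf{a}_k \in \mathbb{R}^d$ has unit norm and is independent of $\mathcal{F}_k$, the vectors $\sqrt d\,\mathbf{a}_k$ are i.i.d. mean-zero isotropic, and for every $\mathcal{F}_k$-measurable $\mathbf{u}$, $\mathbb{E}_{\mathbf{a}_k}[|\langle \mathbf{u},\mathbf{a}_k\rangle| \mid \mathbf{u}] \ge \widetilde{C}\|\mathbf{u}\|_2/\sqrt d$ for a constant $\widetilde C > 0$. Let $\mathbf{x}_0 = 0$, $\mathbf{x}_{k+1} = \mathbf{x}_k + G\lambda^{-k}\mathrm{sign}(y_k - \langle \mathbf{x}_k,\mathbf{a}_k\rangle)\mathbf{a}_k$, $\mathbf{u}_k := \lambda^k(\mathbf{x} - \mathbf{x}_k)/G$ and $Y_k := \|\mathbf{u}_k\|_2^2$, so that $$Y_{k+1} = \lambda^2\Big\{\|\mathbf{u}_k\|^2 - 2\langle \mathbf{u}_k,\mathbf{a}_k\rangle\,\mathrm{sign}\big(\langle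 \mathbf{u}_k,\mathbf{a}_k\rangle + \lambda^k\epsilon_k/G\big) + 1\Big\}.$$ Suppose $$1 < \lambda^2 \le 1 + \widetilde{C}^2\frac{(1-2p)^2}{9d} < \frac{50}{49},$$ and set $a = \frac{1}{2(\lambda^2-1)}$, $b = \frac{3}{2(\lambda^2-1)}$, $\eta = c^*\sqrt{\lambda^2-1}$ with $$c^* = \frac{1}{8\lambda^2}\Big[\frac{\sqrt2\,\lambda^2(1-2p)\widetilde C}{\sqrt d} - \sqrt{\lambda^2-1}\Big(\frac32 + \lambda^2\Big)\Big].$$ Then $$\mathbb{E}\big[e^{\eta(Y_{k+1} - Y_k)}\mathbb{1}_{\{a \le Y_k < b\}} \mid \mathcal{F}_k\big] \le 1 - \frac{\widetilde{C}^2(1-2p)^2}{60 d}.$$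
   Context: $\mathrm{sign}$ is the sign function. The process $Y_k$ is the rescaled squared error of SGD with exponentially decaying step size for $\ell_1$ linear regression under Massart noise. *)

theory Defs
  imports "HOL-Probability.Probability"
begin

text \<open>Sign function taking values in {-1,1} (convention sign 0 = 1), so that
  the norm of sign(t) times a unit vector is 1, as the displayed recursion for Y requires.\<close>
definition sign :: "real \<Rightarrow> real" where
  "sign t = (if t \<ge> 0 then 1 else -1)"

definition gen_sets :: "'a measure \<Rightarrow> ('a \<Rightarrow> 'b::topological_space) \<Rightarrow> 'a set set" where
  "gen_sets M X = {X -` A \<inter> space M | A. A \<in> sets borel}"

definition filt :: "'a measure \<Rightarrow> (nat \<Rightarrow> 'a \<Rightarrow> real^'n) \<Rightarrow> (nat \<Rightarrow> 'a \<Rightarrow> real) \<Rightarrow> nat \<Rightarrow> 'a measure" where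
  "filt M a eps k = sigma (space M) (\<Union>j\<in>{..<k}. gen_sets M (a j) \<union> gen_sets M (eps j))"

fun sgd_iter :: "real \<Rightarrow> real \<Rightarrow> (nat \<Rightarrow> 'a \<Rightarrow> real^'n) \<Rightarrow> (nat \<Rightarrow> 'a \<Rightarrow> real) \<Rightarrow> nat \<Rightarrow> 'a \<Rightarrow> real^'n" where
  "sgd_iter G lam a y 0 \<omega> = 0"
| "sgd_iter G lam a y (Suc k) \<omega> =
     sgd_iter G lam a y k \<omega>
     + (G / lam ^ k * sign (y k \<omega> - sgd_iter G lam a y k \<omega> \<bullet> a k \<omega>)) *\<^sub>R a k \<omega>"

end

theory Submission
  imports Defs
begin

(* Write u_k for the scaled error, which is F_k-measurable, and Z = <u_k, a_k>.  The recursion reads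
   Y_(k+1) = lam^2 (Y_k - 2 Z sign (Z + lam^k eps_k / G) + 1), and the sign is that of Z whenever
   xi_k = 0; hence eta (Y_(k+1) - Y_k) <= eta ((lam^2 - 1) Y_k + lam^2) + tau with
   tau = 2 eta lam^2 (2 xi_k - 1) |Z|.  On the band alo <= Y_k < bhi the choice of eta gives
   |tau| <= 1/5, so exp tau <= 1 + tau + 5/8 tau^2, which bounds the integrand by P + Q (2 xi_k - 1) |Z|
   with P, Q F_k-measurable.  Since xi_k is independent of everything else and a_k of F_k,
   E[(2 xi_k - 1) |Z| | F_k] = (2p - 1) E_a |<u_k, a>|, and the small-ball condition bounds this by
   -(1 - 2p) Ct |u_k| / sqrt d.  What remains is an inequality between real numbers in lam^2, Y_k and
   margin = (1 - 2p) Ct / sqrt d. *)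

section \<open>Elementary inequalities\<close>

lemma exp_le_quadratic:
  fixes t :: real
  assumes "\<bar>t\<bar> \<le> 1 / 5"
  shows "exp t \<le> 1 + t + 5 / 8 * t\<^sup>2"
proof -
  obtain t' where t': "\<bar>t'\<bar> \<le> \<bar>t\<bar>" and "exp t = (\<Sum>m<2. t ^ m / fact m) + exp t' / fact 2 * t ^ 2"
    using Maclaurin_exp_le[of t 2] by blast
  then have taylor: "exp t = 1 + t + exp t' / 2 * t\<^sup>2"
    by (simp add: numeral_2_eq_2)
  have "exp t' * (1 - t') \<le> exp t' * exp (- t')"
    using exp_ge_add_one_self[of "- t'"] by (intro mult_left_mono) auto
  moreover have "exp t' * (4 / 5) \<le> exp t' * (1 - t')"
    using t' assms by (intro mult_left_mono) auto
  moreover have "exp t' * exp (- t') = 1"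
    by (simp add: exp_minus_inverse)
  ultimately have "exp t' \<le> 5 / 4"
    by linarith
  then show ?thesis
    unfolding taylor by (intro add_left_mono mult_right_mono) auto
qed

lemma exp_neg_le_linear:
  fixes t :: real
  assumes "0 \<le> t" "t \<le> 10"
  shows "exp (- (t / 50)) \<le> 1 - t / 60"
proof -
  have "exp (t / 50) \<ge> 1 + t / 50"
    by (rule exp_ge_add_one_self)
  then have "exp (- (t / 50)) \<le> 1 / (1 + t / 50)"
    using assms by (simp add: exp_minus field_simps)
  also have "\<dots> \<le> 1 - t / 60"
  proof -
    have "t * t \<le> 10 * t"
      using assms by (intro mult_right_mono) auto
    then have "1 \<le> (1 - t / 60) * (1 + t / 50)"
      by (simp add: algebra_simps)
    then show ?thesis
      using assms by (simp add: divide_le_eq)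
  qed
  finally show ?thesis .
qed

lemma cstar_lower_bound:
  fixes L s q :: real
  assumes L: "1 < L" and s: "0 \<le> s" and q: "q \<le> s / 3"
  shows "29 / 50 * s \<le> sqrt 2 * L * s - q * (3 / 2 + L)"
proof -
  have "707 / 500 \<le> sqrt (2::real)"
    by (rule real_le_rsqrt) (simp add: power2_eq_square)
  then have "707 / 500 * L * s \<le> sqrt 2 * L * s"
    using L s by (intro mult_right_mono) auto
  moreover have "q * (3 / 2 + L) \<le> s / 3 * (3 / 2 + L)"
    using q L by (intro mult_right_mono) auto
  moreover have "29 / 50 * s \<le> (707 / 500 * L - 1 / 3 * L - 1 / 2) * s"
    using L s by (intro mult_right_mono) auto
  ultimately show ?thesis
    by (simp add: algebra_simps)
qed

lemma drift_step_small:
  fixes L s c r :: real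
  assumes L: "1 < L" "L < 50 / 49" and s: "s\<^sup>2 < 9 / 49"
    and c: "0 \<le> c" "8 * L * c \<le> sqrt 2 * L * s" and r: "0 \<le> r" "r\<^sup>2 \<le> 3 / 2"
  shows "2 * c * L * r \<le> 1 / 5"
proof (rule power2_le_imp_le)
  have "(8 * L * c)\<^sup>2 \<le> (sqrt 2 * L * s)\<^sup>2"
    using c L by (intro power_mono) auto
  then have c2: "(8 * L * c)\<^sup>2 \<le> 2 * L\<^sup>2 * s\<^sup>2"
    by (simp add: power_mult_distrib)
  have "(2 * c * L * r)\<^sup>2 = (8 * L * c)\<^sup>2 * r\<^sup>2 / 16"
    by (simp add: power_mult_distrib)
  also have "\<dots> \<le> 2 * L\<^sup>2 * s\<^sup>2 * (3 / 2) / 16"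
    using c2 r by (intro divide_right_mono mult_mono) auto
  also have "\<dots> = 3 / 16 * L\<^sup>2 * s\<^sup>2"
    by simp
  also have "\<dots> \<le> 3 / 16 * (50 / 49)\<^sup>2 * (9 / 49)"
    using L s by (intro mult_mono power_mono) auto
  also have "\<dots> \<le> (1 / 5)\<^sup>2"
    by (simp add: power2_eq_square)
  finally show "(2 * c * L * r)\<^sup>2 \<le> (1 / 5)\<^sup>2" .
qed simp

lemma cstar_sq_lower_bound:
  fixes L s c :: real
  assumes L: "1 < L" "L < 50 / 49" and s: "0 \<le> s" and c: "29 / 50 * s \<le> 8 * L * c"
  shows "s\<^sup>2 / 50 \<le> 4 * L * c\<^sup>2"
proof -
  have "(29 / 50 * s)\<^sup>2 \<le> (8 * L * c)\<^sup>2"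
    using c s by (intro power_mono) auto
  then have c_sq: "841 / 2500 * s\<^sup>2 \<le> 64 * L\<^sup>2 * c\<^sup>2"
    by (simp add: power_mult_distrib power_divide)
  have "s\<^sup>2 / 50 * (16 * L) \<le> s\<^sup>2 / 50 * (16 * 50 / 49)"
    using L by (intro mult_left_mono) auto
  also have "\<dots> \<le> 841 / 2500 * s\<^sup>2"
    by simp
  also have "\<dots> \<le> 64 * L\<^sup>2 * c\<^sup>2"
    by (rule c_sq)
  also have "\<dots> = (4 * L * c\<^sup>2) * (16 * L)"
    by (simp add: power2_eq_square)
  finally show ?thesis
    using L by simp
qed

lemma drift_exponent_negative:
  fixes L s c q r :: real
  assumes L: "1 < L" "L < 50 / 49" and s: "0 \<le> s" and q: "0 \<le> q"
    and c: "0 \<le> c" "8 * L * c = sqrt 2 * L * s - q * (3 / 2 + L)" "29 / 50 * s \<le> 8 * L * c"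
    and r: "0 \<le> r" "1 / 2 \<le> r\<^sup>2" "r\<^sup>2 \<le> 3 / 2"
  shows "c * q * (r\<^sup>2 + L) + 5 / 2 * c\<^sup>2 * L\<^sup>2 * r\<^sup>2 - 2 * c * L * s * r \<le> - (s\<^sup>2 / 50)"
proof -
  have "(sqrt 2)\<^sup>2 \<le> (2 * r)\<^sup>2"
    using r by (simp add: power_mult_distrib)
  then have "sqrt 2 \<le> 2 * r"
    by (rule power2_le_imp_le) (use r(1) in simp)
  then have "c * L * s * sqrt 2 \<le> c * L * s * (2 * r)"
    using c L s by (intro mult_left_mono) auto
  moreover have "c * q * r\<^sup>2 \<le> c * q * (3 / 2)"
    using r c q by (intro mult_left_mono) auto
  moreover have "5 / 2 * c\<^sup>2 * L\<^sup>2 * r\<^sup>2 \<le> 5 / 2 * c\<^sup>2 * L\<^sup>2 * (3 / 2)"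
    using r by (intro mult_left_mono) auto
  ultimately have "c * q * (r\<^sup>2 + L) + 5 / 2 * c\<^sup>2 * L\<^sup>2 * r\<^sup>2 - 2 * c * L * s * r
      \<le> c * q * (3 / 2 + L) + 15 / 4 * c\<^sup>2 * L\<^sup>2 - sqrt 2 * c * L * s"
    by (simp add: algebra_simps)
  also have "\<dots> = - (c\<^sup>2 * L * (8 - 15 * L / 4))"
  proof -
    have "c * q * (3 / 2 + L) = sqrt 2 * c * L * s - 8 * L * c\<^sup>2"
      using arg_cong[OF c(2), of "\<lambda>t. c * t"] by (simp add: algebra_simps power2_eq_square)
    then show ?thesis
      by (simp add: algebra_simps power2_eq_square)
  qed
  also have "\<dots> \<le> - (4 * L * c\<^sup>2)"
  proof -
    have "c\<^sup>2 * L * 4 \<le> c\<^sup>2 * L * (8 - 15 * L / 4)"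
      using L by (intro mult_left_mono) auto
    then show ?thesis
      by (simp add: algebra_simps)
  qed
  also have "\<dots> \<le> - (s\<^sup>2 / 50)"
    using cstar_sq_lower_bound[OF L s c(3)] by simp
  finally show ?thesis .
qed

text \<open>The band \<open>1 / (2 (L - 1)) \<le> w < 3 / (2 (L - 1))\<close> becomes \<open>1 / 2 \<le> r\<^sup>2 < 3 / 2\<close>
  in the variable \<open>r = sqrt ((L - 1) w)\<close>, in which all the constants below are explicit.\<close>

lemma band_drift_rescaled:
  fixes L s c q r :: real
  assumes L: "1 < L" "L \<le> 1 + s\<^sup>2 / 9" "1 + s\<^sup>2 / 9 < 50 / 49" and s: "0 \<le> s"
    and q: "q = sqrt (L - 1)" and c: "8 * L * c = sqrt 2 * L * s - q * (3 / 2 + L)"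
    and r: "0 \<le> r" "1 / 2 \<le> r\<^sup>2" "r\<^sup>2 < 3 / 2"
  shows "0 \<le> c" "2 * c * L * r \<le> 1 / 5"
    "exp (c * q * (r\<^sup>2 + L)) * (1 + 5 / 2 * c\<^sup>2 * L\<^sup>2 * r\<^sup>2 - 2 * c * L * s * r) \<le> 1 - s\<^sup>2 / 60"
proof -
  have q0: "0 \<le> q"
    using L q by simp
  have "q \<le> sqrt (s\<^sup>2 / 9)"
    using L unfolding q by (intro real_sqrt_le_mono) simp
  then have "q \<le> s / 3"
    using s by (simp add: real_sqrt_divide)
  then have c_lo: "29 / 50 * s \<le> 8 * L * c"
    using cstar_lower_bound[OF L(1) s] c by simp
  then have "0 \<le> 8 * L * c"
    using s by linarith
  then show c0: "0 \<le> c"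
    using L(1) by (smt (verit) mult_pos_neg)
  have s_small: "s\<^sup>2 < 9 / 49"
    using L by simp
  have "8 * L * c \<le> sqrt 2 * L * s"
    using c q0 L by simp
  then show "2 * c * L * r \<le> 1 / 5"
    using L s_small c0 r by (intro drift_step_small) auto
  define \<Phi> where "\<Phi> = 5 / 2 * c\<^sup>2 * L\<^sup>2 * r\<^sup>2 - 2 * c * L * s * r"
  have "exp (c * q * (r\<^sup>2 + L)) * (1 + \<Phi>) \<le> exp (c * q * (r\<^sup>2 + L)) * exp \<Phi>"
    using exp_ge_add_one_self[of \<Phi>] by (intro mult_left_mono) auto
  also have "\<dots> \<le> exp (- (s\<^sup>2 / 50))"
    unfolding \<Phi>_def exp_add[symmetric]
    using drift_exponent_negative[OF _ _ s q0 c0 c c_lo r(1,2)] L r(3)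
    by (simp add: algebra_simps)
  also have "\<dots> \<le> 1 - s\<^sup>2 / 60"
    using s_small by (intro exp_neg_le_linear) auto
  finally show "exp (c * q * (r\<^sup>2 + L)) * (1 + 5 / 2 * c\<^sup>2 * L\<^sup>2 * r\<^sup>2 - 2 * c * L * s * r)
      \<le> 1 - s\<^sup>2 / 60"
    unfolding \<Phi>_def by (simp add: algebra_simps)
qed

lemma band_drift_numeric:
  fixes L s w c \<eta> :: real
  assumes L: "1 < L" "L \<le> 1 + s\<^sup>2 / 9" "1 + s\<^sup>2 / 9 < 50 / 49" and s: "0 \<le> s"
    and w: "1 / (2 * (L - 1)) \<le> w" "w < 3 / (2 * (L - 1))"
    and c: "8 * L * c = sqrt 2 * L * s - sqrt (L - 1) * (3 / 2 + L)"
    and \<eta>: "\<eta> = c * sqrt (L - 1)"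
  shows "0 \<le> \<eta>" "2 * \<eta> * L * sqrt w \<le> 1 / 5"
    "exp (\<eta> * ((L - 1) * w + L)) * (1 + 5 / 2 * \<eta>\<^sup>2 * L\<^sup>2 * w - 2 * \<eta> * L * s * sqrt w)
       \<le> 1 - s\<^sup>2 / 60"
proof -
  define r where "r = sqrt ((L - 1) * w)"
  have "0 < 2 * (L - 1)"
    using L by simp
  then have "1 \<le> w * (2 * (L - 1))" "w * (2 * (L - 1)) < 3"
    using w by (simp_all only: pos_divide_le_eq pos_less_divide_eq)
  then have mw: "1 / 2 \<le> (L - 1) * w" "(L - 1) * w < 3 / 2"
    by (simp_all add: algebra_simps)
  then have r_sq: "r\<^sup>2 = (L - 1) * w" and r0: "0 \<le> r"
    unfolding r_def by auto
  note rescaled = band_drift_rescaled[OF L s refl c r0, unfolded r_sq, OF mw]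
  show "0 \<le> \<eta>"
    using rescaled(1) L \<eta> by simp
  have \<eta>_sqrt_w: "\<eta> * sqrt w = c * r"
    unfolding \<eta> r_def using L by (simp add: real_sqrt_mult)
  have "0 < 1 / (2 * (L - 1))"
    using L by simp
  then have "0 \<le> w"
    using w(1) by linarith
  then have \<eta>_sq_w: "\<eta>\<^sup>2 * w = c\<^sup>2 * r\<^sup>2"
    using arg_cong[OF \<eta>_sqrt_w, of "\<lambda>t. t\<^sup>2"] by (simp add: power_mult_distrib)
  have "2 * \<eta> * L * sqrt w = 2 * L * (\<eta> * sqrt w)"
    by (simp only: mult_ac)
  then have "2 * \<eta> * L * sqrt w = 2 * c * L * r"
    unfolding \<eta>_sqrt_w by (simp only: mult_ac)
  then show "2 * \<eta> * L * sqrt w \<le> 1 / 5"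
    using rescaled(2) by linarith
  have exponent: "\<eta> * ((L - 1) * w + L) = c * sqrt (L - 1) * ((L - 1) * w + L)"
    by (simp add: \<eta>)
  have "1 + 5 / 2 * \<eta>\<^sup>2 * L\<^sup>2 * w - 2 * \<eta> * L * s * sqrt w
      = 1 + 5 / 2 * L\<^sup>2 * (\<eta>\<^sup>2 * w) - 2 * L * s * (\<eta> * sqrt w)"
    by (simp only: mult_ac)
  then have factor: "1 + 5 / 2 * \<eta>\<^sup>2 * L\<^sup>2 * w - 2 * \<eta> * L * s * sqrt w
      = 1 + 5 / 2 * c\<^sup>2 * L\<^sup>2 * ((L - 1) * w) - 2 * c * L * s * r"
    unfolding \<eta>_sqrt_w \<eta>_sq_w r_sq by (simp only: mult_ac)
  show "exp (\<eta> * ((L - 1) * w + L)) * (1 + 5 / 2 * \<eta>\<^sup>2 * L\<^sup>2 * w - 2 * \<eta> * L * s * sqrt w)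
       \<le> 1 - s\<^sup>2 / 60"
    unfolding exponent factor by (rule rescaled(3))
qed

section \<open>Independence and conditional expectation\<close>

context prob_space
begin

lemma indep_var_of_indep_set:
  assumes ind: "indep_set (sets A) (sets B)"
    and space: "space A = space M" "space B = space M"
    and X: "X \<in> measurable A S" and Y: "Y \<in> measurable B T"
  shows "indep_var S X T Y"
proof -
  have "sets A \<subseteq> events" "sets B \<subseteq> events"
    using ind unfolding indep_set_def indep_sets_def by (metis UNIV_I case_bool_if)+
  then have "subalgebra M A" "subalgebra M B"
    using space by (auto simp: subalgebra_def)
  then have XM: "X \<in> measurable M S" and YM: "Y \<in> measurable M T"
    using X Y by (auto intro: measurable_from_subalg)
  have "sigma_sets (space A) {X -` C \<inter> space A | C. C \<in> sets S} \<subseteq> sets A"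
    using X by (intro sets.sigma_sets_subset) (auto intro: measurable_sets)
  moreover have "sigma_sets (space B) {Y -` C \<inter> space B | C. C \<in> sets T} \<subseteq> sets B"
    using Y by (intro sets.sigma_sets_subset) (auto intro: measurable_sets)
  ultimately show ?thesis
    using XM YM space unfolding indep_var_eq indep_set_def
    by (auto intro!: indep_sets_mono_sets[OF ind[unfolded indep_set_def]] split: bool.split) blast+
qed

lemma indep_set_commute: "indep_set A B \<Longrightarrow> indep_set B A"
  unfolding indep_sets2_eq by (metis Int_commute mult.commute)

lemma integral_indep_var_freeze:
  fixes f :: "'b \<times> 'b \<Rightarrow> real"
  assumes ind: "indep_var S X T Y"
    and f: "f \<in> borel_measurable (S \<Otimes>\<^sub>M T)" and bounded: "\<And>z. \<bar>f z\<bar> \<le> B"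
  shows "(\<integral>\<omega>. f (X \<omega>, Y \<omega>) \<partial>M) = (\<integral>\<omega>. (\<integral>\<omega>'. f (X \<omega>, Y \<omega>') \<partial>M) \<partial>M)"
proof -
  have X: "X \<in> measurable M S" and Y: "Y \<in> measurable M T"
    using ind by (rule indep_var_rv1, rule indep_var_rv2)
  interpret PX: prob_space "distr M S X" by (rule prob_space_distr) (rule X)
  interpret PY: prob_space "distr M T Y" by (rule prob_space_distr) (rule Y)
  interpret P: pair_prob_space "distr M S X" "distr M T Y" ..
  have f': "f \<in> borel_measurable (distr M S X \<Otimes>\<^sub>M distr M T Y)"
    using f by (simp add: measurable_cong_sets[OF sets_pair_measure_cong[OF sets_distr sets_distr] refl])
  have "(\<integral>\<omega>. f (X \<omega>, Y \<omega>) \<partial>M) = integral\<^sup>L (distr M (S \<Otimes>\<^sub>M T) (\<lambda>\<omega>. (X \<omega>, Y \<omega>))) f"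
    using X Y f by (subst integral_distr) (auto intro: measurable_Pair)
  also have "\<dots> = integral\<^sup>L (distr M S X \<Otimes>\<^sub>M distr M T Y) f"
    using ind by (simp add: indep_var_distribution_eq)
  also have "\<dots> = (\<integral>s. (\<integral>t. f (s, t) \<partial>distr M T Y) \<partial>distr M S X)"
    using f' bounded by (intro P.integral_fst'[symmetric] P.integrable_const_bound[where B=B]) auto
  also have "\<dots> = (\<integral>\<omega>. (\<integral>t. f (X \<omega>, t) \<partial>distr M T Y) \<partial>M)"
    using f' X by (subst integral_distr) (auto intro: PY.borel_measurable_lebesgue_integral
        simp: measurable_cong_sets[OF sets_distr])
  also have "\<dots> = (\<integral>\<omega>. (\<integral>\<omega>'. f (X \<omega>, Y \<omega>') \<partial>M) \<partial>M)"
  proof (rule Bochner_Integration.integral_cong[OF refl])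
    fix \<omega> assume "\<omega> \<in> space M"
    then have "(\<lambda>t. f (X \<omega>, t)) \<in> borel_measurable T"
      using f measurable_space[OF X] by measurable
    then show "(\<integral>t. f (X \<omega>, t) \<partial>distr M T Y) = (\<integral>\<omega>'. f (X \<omega>, Y \<omega>') \<partial>M)"
      by (rule integral_distr[OF Y])
  qed
  finally show ?thesis .
qed

lemma set_integral_indep_freeze:
  fixes g :: "'b \<times> 'b \<Rightarrow> real"
  assumes ind: "indep_set (sets A) (sets F)" and space: "space A = space M" "space F = space M"
    and V: "V \<in> measurable F S" and Y: "Y \<in> measurable A T"
    and g: "g \<in> borel_measurable (S \<Otimes>\<^sub>M T)"
    and bounded: "\<And>\<omega> \<omega>'. \<omega> \<in> space M \<Longrightarrow> \<omega>' \<in> space M \<Longrightarrow> \<bar>g (V \<omega>, Y \<omega>')\<bar> \<le> B"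
    and E: "E \<in> sets F"
  shows "(\<integral>\<omega>\<in>E. g (V \<omega>, Y \<omega>) \<partial>M) = (\<integral>\<omega>\<in>E. (\<integral>\<omega>'. g (V \<omega>, Y \<omega>') \<partial>M) \<partial>M)"
proof -
  have "0 \<le> B"
    using bounded not_empty by force
  \<comment> \<open>\<open>indep_var\<close> needs both variables in one type: the indicator of \<open>E\<close> travels with \<open>V\<close>,
    \<open>Y\<close> gets a dummy component, and clipping at \<open>\<plusminus>B\<close> makes the integrand globally bounded.\<close>
  define X where "X \<omega> = (V \<omega>, \<omega> \<in> E)" for \<omega>
  define Y' where "Y' \<omega> = (Y \<omega>, True)" for \<omega>
  define \<phi> where "\<phi> z = (if snd (fst z) then max (- B) (min B (g (fst (fst z), fst (snd z)))) else 0)"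
    for z :: "('b \<times> bool) \<times> ('b \<times> bool)"
  have "X \<in> measurable F (S \<Otimes>\<^sub>M count_space UNIV)"
    unfolding X_def using E V by measurable
  moreover have "Y' \<in> measurable A (T \<Otimes>\<^sub>M count_space UNIV)"
    unfolding Y'_def using Y by measurable
  ultimately have indep: "indep_var (S \<Otimes>\<^sub>M count_space UNIV) X (T \<Otimes>\<^sub>M count_space UNIV) Y'"
    using indep_set_commute[OF ind] space by (intro indep_var_of_indep_set)
  have \<phi>: "\<phi> \<in> borel_measurable ((S \<Otimes>\<^sub>M count_space UNIV) \<Otimes>\<^sub>M (T \<Otimes>\<^sub>M count_space UNIV))"
    unfolding \<phi>_def using g by measurable
  have \<phi>_eq: "\<phi> (X \<omega>, Y' \<omega>') = indicator E \<omega> * g (V \<omega>, Y \<omega>')"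
    if "\<omega> \<in> space M" "\<omega>' \<in> space M" for \<omega> \<omega>'
    using bounded[OF that] unfolding \<phi>_def X_def Y'_def by (auto simp: abs_le_iff)
  have "(\<integral>\<omega>\<in>E. g (V \<omega>, Y \<omega>) \<partial>M) = (\<integral>\<omega>. \<phi> (X \<omega>, Y' \<omega>) \<partial>M)"
    unfolding set_lebesgue_integral_def by (intro Bochner_Integration.integral_cong) (auto simp: \<phi>_eq)
  also have "\<dots> = (\<integral>\<omega>. (\<integral>\<omega>'. \<phi> (X \<omega>, Y' \<omega>') \<partial>M) \<partial>M)"
    using indep \<phi> by (rule integral_indep_var_freeze[where B=B])
      (use \<open>0 \<le> B\<close> in \<open>auto simp: \<phi>_def abs_le_iff\<close>)
  also have "\<dots> = (\<integral>\<omega>. indicator E \<omega> * (\<integral>\<omega>'. g (V \<omega>, Y \<omega>') \<partial>M) \<partial>M)"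
  proof (rule Bochner_Integration.integral_cong[OF refl])
    fix \<omega> assume "\<omega> \<in> space M"
    then have "(\<integral>\<omega>'. \<phi> (X \<omega>, Y' \<omega>') \<partial>M) = (\<integral>\<omega>'. indicator E \<omega> * g (V \<omega>, Y \<omega>') \<partial>M)"
      by (intro Bochner_Integration.integral_cong) (auto simp: \<phi>_eq)
    then show "(\<integral>\<omega>'. \<phi> (X \<omega>, Y' \<omega>') \<partial>M) = indicator E \<omega> * (\<integral>\<omega>'. g (V \<omega>, Y \<omega>') \<partial>M)"
      by simp
  qed
  finally show ?thesis
    by (simp add: set_lebesgue_integral_def)
qed

lemma real_cond_exp_indep_integral:
  fixes g :: "'b \<times> 'b \<Rightarrow> real"
  assumes subalg: "subalgebra M F"
    and ind: "indep_set (sets A) (sets F)" and space_A: "space A = space M"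
    and V: "V \<in> measurable F S" and Y: "Y \<in> measurable A T"
    and g: "g \<in> borel_measurable (S \<Otimes>\<^sub>M T)"
    and bounded: "\<And>\<omega> \<omega>'. \<omega> \<in> space M \<Longrightarrow> \<omega>' \<in> space M \<Longrightarrow> \<bar>g (V \<omega>, Y \<omega>')\<bar> \<le> B"
  shows "AE \<omega> in M. real_cond_exp M F (\<lambda>\<omega>. g (V \<omega>, Y \<omega>)) \<omega> = (\<integral>t. g (V \<omega>, t) \<partial>distr M T Y)"
proof -
  interpret finite_measure_subalgebra M F by unfold_locales (rule subalg)
  have space_F: "space F = space M"
    using subalg by (simp add: subalgebra_def)
  have "sets A \<subseteq> events"
    using ind unfolding indep_sets2_eq by blast
  then have YM[measurable]: "Y \<in> measurable M T"
    using Y space_A by (auto intro: measurable_from_subalg simp: subalgebra_def)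
  have VM[measurable]: "V \<in> measurable M S"
    using subalg V by (rule measurable_from_subalg)
  interpret law: prob_space "distr M T Y" by (rule prob_space_distr) simp
  define G where "G \<omega> = (\<integral>t. g (V \<omega>, t) \<partial>distr M T Y)" for \<omega>
  have G_eq: "G \<omega> = (\<integral>\<omega>'. g (V \<omega>, Y \<omega>') \<partial>M)" and G_bounded: "\<bar>G \<omega>\<bar> \<le> B"
    if "\<omega> \<in> space M" for \<omega>
  proof -
    have g_section: "(\<lambda>t. g (V \<omega>, t)) \<in> borel_measurable T"
      using g measurable_space[OF VM that] by measurable
    then show G_eq: "G \<omega> = (\<integral>\<omega>'. g (V \<omega>, Y \<omega>') \<partial>M)"
      unfolding G_def by (rule integral_distr[OF YM])
    have "integrable M (\<lambda>\<omega>'. g (V \<omega>, Y \<omega>'))"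
      using that bounded measurable_compose[OF YM g_section]
      by (intro integrable_const_bound[where B=B]) auto
    then have "(\<integral>\<omega>'. \<bar>g (V \<omega>, Y \<omega>')\<bar> \<partial>M) \<le> B"
      using bounded[OF that] by (intro integral_le_const) auto
    then show "\<bar>G \<omega>\<bar> \<le> B"
      unfolding G_eq using integral_abs_bound[of M "\<lambda>\<omega>'. g (V \<omega>, Y \<omega>')"] by linarith
  qed
  have "(\<lambda>(\<omega>, t). g (V \<omega>, t)) \<in> borel_measurable (F \<Otimes>\<^sub>M T)"
    using V g by measurable
  then have G_F: "G \<in> borel_measurable F"
    unfolding G_def
    by (intro law.borel_measurable_lebesgue_integral)
      (simp add: measurable_cong_sets[OF sets_pair_measure_cong[OF refl sets_distr] refl])
  show ?thesis
    unfolding G_def[symmetric]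
  proof (rule real_cond_exp_charact)
    fix E assume "E \<in> sets F"
    then show "(\<integral>\<omega>\<in>E. g (V \<omega>, Y \<omega>) \<partial>M) = (\<integral>\<omega>\<in>E. G \<omega> \<partial>M)"
      using set_integral_indep_freeze[OF ind space_A space_F V Y g bounded] G_eq
      by (auto simp: set_lebesgue_integral_def intro: Bochner_Integration.integral_cong)
  next
    show "integrable M (\<lambda>\<omega>. g (V \<omega>, Y \<omega>))"
      using bounded g by (intro integrable_const_bound[where B=B]) auto
    show "integrable M G"
      using G_bounded G_F subalg
      by (intro integrable_const_bound[where B=B]) (auto intro: measurable_from_subalg)
  qed (rule G_F)
qed

lemma real_cond_exp_mult_indep:
  assumes subalg: "subalgebra M F"
    and ind: "indep_set (sets A) (sets N)" and space: "space A = space M" "space N = space M"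
    and F_N: "sets F \<subseteq> sets N"
    and X: "X \<in> borel_measurable A" "integrable M X"
    and Z: "Z \<in> borel_measurable N" "integrable M Z"
  shows "AE \<omega> in M. real_cond_exp M F (\<lambda>\<omega>. X \<omega> * Z \<omega>) \<omega> = expectation X * real_cond_exp M F Z \<omega>"
proof -
  interpret finite_measure_subalgebra M F by unfold_locales (rule subalg)
  show ?thesis
  proof (rule real_cond_exp_charact)
    show "integrable M (\<lambda>\<omega>. X \<omega> * Z \<omega>)"
      using ind space X Z by (intro indep_var_integrable indep_var_of_indep_set)
    fix E assume E: "E \<in> sets F"
    then have [measurable]: "E \<in> sets N" "E \<in> sets M"
      using F_N subalg by (auto simp: subalgebra_def)
    have [measurable]: "Z \<in> borel_measurable N" by (rule Z(1))
    have "indep_var borel X borel (\<lambda>\<omega>. indicator E \<omega> * Z \<omega>)"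
      using ind space X(1) by (rule indep_var_of_indep_set) measurable
    then have "(\<integral>\<omega>\<in>E. X \<omega> * Z \<omega> \<partial>M) = expectation X * (\<integral>\<omega>\<in>E. Z \<omega> \<partial>M)"
      using X(2) integrable_mult_indicator[OF _ Z(2)]
      by (simp add: indep_var_lebesgue_integral set_lebesgue_integral_def mult.left_commute)
    also have "\<dots> = (\<integral>\<omega>\<in>E. expectation X * real_cond_exp M F Z \<omega> \<partial>M)"
      using real_cond_exp_intA[OF Z(2) E] by simp
    finally show "(\<integral>\<omega>\<in>E. X \<omega> * Z \<omega> \<partial>M) = (\<integral>\<omega>\<in>E. expectation X * real_cond_exp M F Z \<omega> \<partial>M)" .
  qed (use Z(2) in auto)
qed

lemma real_cond_exp_le_of_affine_bound:
  assumes subalg: "subalgebra M F"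
    and f: "integrable M f" and bound: "\<And>\<omega>. \<omega> \<in> space M \<Longrightarrow> f \<omega> \<le> P \<omega> + Q \<omega> * h \<omega>"
    and P: "P \<in> borel_measurable F" "integrable M P"
    and Q: "Q \<in> borel_measurable F" and Qh: "integrable M (\<lambda>\<omega>. Q \<omega> * h \<omega>)"
    and h: "h \<in> borel_measurable M" and cond_h: "AE \<omega> in M. real_cond_exp M F h \<omega> = g \<omega>"
    and c: "AE \<omega> in M. P \<omega> + Q \<omega> * g \<omega> \<le> c"
  shows "AE \<omega> in M. real_cond_exp M F f \<omega> \<le> c"
proof -
  interpret finite_measure_subalgebra M F by unfold_locales (rule subalg)
  have PQh: "integrable M (\<lambda>\<omega>. P \<omega> + Q \<omega> * h \<omega>)"
    using P(2) Qh by simp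
  have "AE \<omega> in M. real_cond_exp M F f \<omega> \<le> real_cond_exp M F (\<lambda>\<omega>. P \<omega> + Q \<omega> * h \<omega>) \<omega>"
    using bound f PQh by (intro real_cond_exp_mono) auto
  moreover have "AE \<omega> in M. real_cond_exp M F (\<lambda>\<omega>. P \<omega> + Q \<omega> * h \<omega>) \<omega>
      = real_cond_exp M F P \<omega> + real_cond_exp M F (\<lambda>\<omega>. Q \<omega> * h \<omega>) \<omega>"
    using P(2) Qh by (rule real_cond_exp_add)
  moreover have "AE \<omega> in M. real_cond_exp M F P \<omega> = P \<omega>"
    using P by (intro real_cond_exp_F_meas)
  moreover have "AE \<omega> in M. real_cond_exp M F (\<lambda>\<omega>. Q \<omega> * h \<omega>) \<omega> = Q \<omega> * real_cond_exp M F h \<omega>"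
    using Q h Qh by (rule real_cond_exp_mult)
  ultimately show ?thesis
    using cond_h c by eventually_elim simp
qed

end

section \<open>The sign function, the filtration and the iterates\<close>

lemma borel_measurable_sign [measurable (raw)]:
  "f \<in> borel_measurable M \<Longrightarrow> (\<lambda>\<omega>. sign (f \<omega>)) \<in> borel_measurable M"
  unfolding sign_def by measurable

lemma sign_mult_self: "sign t * t = \<bar>t\<bar>"
  by (simp add: sign_def)

lemma sign_mult_pos: "0 < c \<Longrightarrow> sign (c * t) = sign t"
  by (simp add: sign_def zero_le_mult_iff)

lemma sign_sq: "sign t * sign t = 1"
  by (simp add: sign_def)

lemma neg_sign_mult_le_abs: "- (sign s * t) \<le> \<bar>t\<bar>"
  by (simp add: sign_def abs_if)

lemma gen_sets_subset_Pow: "gen_sets M X \<subseteq> Pow (space M)"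
  unfolding gen_sets_def by auto

lemma gen_sets_subset_sets:
  assumes "space N = space M" "X \<in> borel_measurable N"
  shows "gen_sets M X \<subseteq> sets N"
  using assms measurable_sets[OF assms(2)] unfolding gen_sets_def by auto

lemma measurable_sigma_gen_sets:
  assumes "gen_sets M X \<subseteq> S" "S \<subseteq> Pow (space M)"
  shows "X \<in> borel_measurable (sigma (space M) S)"
proof (rule measurableI)
  fix A :: "'b set" assume "A \<in> sets borel"
  then show "X -` A \<inter> space (sigma (space M) S) \<in> sets (sigma (space M) S)"
    using assms unfolding gen_sets_def by (auto simp: space_measure_of_conv)
qed (simp add: space_measure_of_conv)

definition gen_sigma :: "'a measure \<Rightarrow> ('a \<Rightarrow> 'b::topological_space) \<Rightarrow> 'a measure" where
  "gen_sigma M X = sigma (space M) (gen_sets M X)"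

lemma space_gen_sigma [simp]: "space (gen_sigma M X) = space M"
  unfolding gen_sigma_def by (simp add: space_measure_of_conv)

lemma sets_gen_sigma: "sets (gen_sigma M X) = sigma_sets (space M) (gen_sets M X)"
  unfolding gen_sigma_def using gen_sets_subset_Pow by (rule sets_measure_of)

lemma measurable_gen_sigma: "X \<in> borel_measurable (gen_sigma M X)"
  unfolding gen_sigma_def by (rule measurable_sigma_gen_sets) (auto simp: gen_sets_subset_Pow)

lemma space_filt [simp]: "space (filt M a eps k) = space M"
  unfolding filt_def by (simp add: space_measure_of_conv)

lemma filt_measurable:
  assumes "j < k"
  shows "a j \<in> borel_measurable (filt M a eps k)" "eps j \<in> borel_measurable (filt M a eps k)"
proof -
  have gen: "(\<Union>i\<in>{..<k}. gen_sets M (a i) \<union> gen_sets M (eps i)) \<subseteq> Pow (space M)"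
    by (simp add: UN_subset_iff gen_sets_subset_Pow)
  show "a j \<in> borel_measurable (filt M a eps k)" "eps j \<in> borel_measurable (filt M a eps k)"
    unfolding filt_def using assms by (intro measurable_sigma_gen_sets[OF _ gen]; auto)+
qed

lemma sets_filt_subset:
  assumes "space N = space M"
    and "\<And>j. j < k \<Longrightarrow> a j \<in> borel_measurable N" "\<And>j. j < k \<Longrightarrow> eps j \<in> borel_measurable N"
  shows "sets (filt M a eps k) \<subseteq> sets N"
proof -
  let ?gen = "\<Union>j\<in>{..<k}. gen_sets M (a j) \<union> gen_sets M (eps j)"
  have "?gen \<subseteq> Pow (space M)"
    by (simp add: UN_subset_iff gen_sets_subset_Pow)
  then have "sets (filt M a eps k) = sigma_sets (space M) ?gen"
    unfolding filt_def by (rule sets_measure_of)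
  moreover have "?gen \<subseteq> sets N"
    using assms by (simp add: UN_subset_iff gen_sets_subset_sets)
  ultimately show ?thesis
    using sets.sigma_sets_subset[of ?gen N] assms(1) by simp
qed

lemma subalgebra_filt:
  assumes "\<And>j. a j \<in> borel_measurable M" "\<And>j. eps j \<in> borel_measurable M"
  shows "subalgebra M (filt M a eps k)"
proof -
  have "sets (filt M a eps k) \<subseteq> sets M"
    using assms by (intro sets_filt_subset) auto
  then show ?thesis
    by (simp add: subalgebra_def)
qed

lemma sgd_iter_measurable:
  assumes "\<And>j. j < k \<Longrightarrow> a j \<in> borel_measurable N" "\<And>j. j < k \<Longrightarrow> y j \<in> borel_measurable N"
  shows "sgd_iter G lam a y k \<in> borel_measurable N"
proof -
  have "sgd_iter G lam a y j \<in> borel_measurable N" if "j \<le> k" for j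
    using that
  proof (induction j)
    case 0
    have "sgd_iter G lam a y 0 = (\<lambda>_. 0)"
      by (rule ext) simp
    then show ?case
      by (simp only: borel_measurable_const)
  next
    case (Suc j)
    then have [measurable]: "sgd_iter G lam a y j \<in> borel_measurable N"
      "a j \<in> borel_measurable N" "y j \<in> borel_measurable N"
      using assms by auto
    show ?case by simp measurable
  qed
  then show ?thesis
    by blast
qed

section \<open>The scaled error under Massart noise\<close>

text \<open>The quantities introduced by \<open>defines\<close> in the theorem are parameters with defining
  equations, so that the theorem is an interpretation of the locale.\<close>

locale massart_sgd =
  fixes M :: "'a measure"
    and x :: "real^'n"
    and a :: "nat \<Rightarrow> 'a \<Rightarrow> real^'n"
    and \<xi> \<nu> :: "nat \<Rightarrow> 'a \<Rightarrow> real"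
    and p G lam Ct d :: real
    and eps y :: "nat \<Rightarrow> 'a \<Rightarrow> real"
    and F :: "nat \<Rightarrow> 'a measure"
    and Y :: "nat \<Rightarrow> 'a \<Rightarrow> real"
    and alo bhi cstar \<eta> :: real
  assumes d_def: "d = real CARD('n)"
    and eps_def: "eps = (\<lambda>k \<omega>. \<xi> k \<omega> * \<nu> k \<omega>)"
    and y_def: "y = (\<lambda>k \<omega>. x \<bullet> a k \<omega> + eps k \<omega>)"
    and F_def: "F = filt M a eps"
    and Y_def: "Y = (\<lambda>k \<omega>. (norm ((lam ^ k / G) *\<^sub>R (x - sgd_iter G lam a y k \<omega>)))\<^sup>2)"
    and alo_def: "alo = 1 / (2 * (lam\<^sup>2 - 1))"
    and bhi_def: "bhi = 3 / (2 * (lam\<^sup>2 - 1))"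
    and cstar_def: "cstar = 1 / (8 * lam\<^sup>2) *
          (sqrt 2 * lam\<^sup>2 * (1 - 2 * p) * Ct / sqrt d - sqrt (lam\<^sup>2 - 1) * (3 / 2 + lam\<^sup>2))"
    and eta_def: "\<eta> = cstar * sqrt (lam\<^sup>2 - 1)"
    and M_prob: "prob_space M"
    and p: "0 \<le> p" "p < 1 / 2"
    and G: "G > 0" and lam: "lam > 0" and Ct: "Ct > 0"
    and a_meas: "\<And>k. a k \<in> borel_measurable M"
    and \<xi>_meas: "\<And>k. \<xi> k \<in> borel_measurable M"
    and \<nu>_meas: "\<And>k. \<nu> k \<in> borel_measurable M"
    and \<xi>_ind: "\<And>k \<omega>. \<omega> \<in> space M \<Longrightarrow> \<xi> k \<omega> \<in> {0, 1}"
    and \<xi>_prob: "\<And>k. measure M {\<omega> \<in> space M. \<xi> k \<omega> = 1} = p"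
    and \<xi>_indep: "\<And>k. prob_space.indep_set M (sigma_sets (space M) (gen_sets M (\<xi> k)))
          (sigma_sets (space M) ((\<Union>j. gen_sets M (a j) \<union> gen_sets M (\<nu> j))
                                 \<union> (\<Union>j\<in>UNIV - {k}. gen_sets M (\<xi> j))))"
    and a_unit: "\<And>k \<omega>. \<omega> \<in> space M \<Longrightarrow> norm (a k \<omega>) = 1"
    and a_indep_F: "\<And>k. prob_space.indep_set M (sigma_sets (space M) (gen_sets M (a k))) (sets (F k))"
    and small_ball: "\<And>k (u :: 'a \<Rightarrow> real^'n). u \<in> borel_measurable (F k) \<Longrightarrow>
          AE \<omega> in M. (\<integral>v. \<bar>u \<omega> \<bullet> v\<bar> \<partial>(distr M borel (a k))) \<ge> Ct * norm (u \<omega>) / sqrt d"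
    and lam_lo: "1 < lam\<^sup>2"
    and lam_hi: "lam\<^sup>2 \<le> 1 + Ct\<^sup>2 * (1 - 2 * p)\<^sup>2 / (9 * d)"
    and lam_hi2: "1 + Ct\<^sup>2 * (1 - 2 * p)\<^sup>2 / (9 * d) < 50 / 49"

sublocale massart_sgd \<subseteq> prob_space M
  by (rule M_prob)

context massart_sgd
begin

declare a_meas [measurable] \<xi>_meas [measurable] \<nu>_meas [measurable]

lemma eps_measurable [measurable]: "eps k \<in> borel_measurable M"
  unfolding eps_def by measurable

definition margin :: real where
  "margin = (1 - 2 * p) * Ct / sqrt d"

definition u :: "nat \<Rightarrow> 'a \<Rightarrow> real^'n" where
  "u k \<omega> = (lam ^ k / G) *\<^sub>R (x - sgd_iter G lam a y k \<omega>)"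

definition band :: "nat \<Rightarrow> 'a set" where
  "band k = {\<omega>. alo \<le> Y k \<omega> \<and> Y k \<omega> < bhi}"

definition u_band :: "nat \<Rightarrow> 'a \<Rightarrow> real^'n" where
  "u_band k \<omega> = indicator (band k) \<omega> *\<^sub>R u k \<omega>"

lemma Y_eq: "Y k \<omega> = (norm (u k \<omega>))\<^sup>2"
  by (simp add: Y_def u_def)

lemma Y_nonneg: "0 \<le> Y k \<omega>"
  by (simp add: Y_eq)

lemma margin_bounds:
  shows "0 \<le> margin" and "lam\<^sup>2 \<le> 1 + margin\<^sup>2 / 9" and "1 + margin\<^sup>2 / 9 < 50 / 49"
    and "margin\<^sup>2 = Ct\<^sup>2 * (1 - 2 * p)\<^sup>2 / d"
proof -
  have d: "0 < d"
    by (simp add: d_def)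
  show "0 \<le> margin"
    unfolding margin_def using p Ct d by simp
  show sq: "margin\<^sup>2 = Ct\<^sup>2 * (1 - 2 * p)\<^sup>2 / d"
    unfolding margin_def using d by (simp add: power_divide power_mult_distrib)
  show "lam\<^sup>2 \<le> 1 + margin\<^sup>2 / 9" "1 + margin\<^sup>2 / 9 < 50 / 49"
    using lam_hi lam_hi2 unfolding sq by (simp_all add: mult.commute)
qed

lemma cstar_eq: "8 * lam\<^sup>2 * cstar = sqrt 2 * lam\<^sup>2 * margin - sqrt (lam\<^sup>2 - 1) * (3 / 2 + lam\<^sup>2)"
  unfolding cstar_def margin_def using lam by simp

lemmas band_inequalities =
  band_drift_numeric[OF lam_lo margin_bounds(2,3,1) _ _ cstar_eq eta_def]

lemma bhi_pos: "0 < bhi"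
  unfolding bhi_def using lam_lo by simp

lemma eta_nonneg: "0 \<le> \<eta>"
  using band_inequalities(1)[of alo] lam_lo unfolding alo_def
  by (simp add: divide_strict_right_mono)

lemma band_numeric:
  assumes "\<omega> \<in> band k"
  shows "2 * \<eta> * lam\<^sup>2 * sqrt (Y k \<omega>) \<le> 1 / 5"
    "exp (\<eta> * ((lam\<^sup>2 - 1) * Y k \<omega> + lam\<^sup>2))
       * (1 + 5 / 2 * \<eta>\<^sup>2 * (lam\<^sup>2)\<^sup>2 * Y k \<omega> - 2 * \<eta> * lam\<^sup>2 * margin * sqrt (Y k \<omega>))
     \<le> 1 - margin\<^sup>2 / 60"
proof -
  have "alo \<le> Y k \<omega>" "Y k \<omega> < bhi"
    using assms by (auto simp: band_def)
  then show "2 * \<eta> * lam\<^sup>2 * sqrt (Y k \<omega>) \<le> 1 / 5"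
    "exp (\<eta> * ((lam\<^sup>2 - 1) * Y k \<omega> + lam\<^sup>2))
       * (1 + 5 / 2 * \<eta>\<^sup>2 * (lam\<^sup>2)\<^sup>2 * Y k \<omega> - 2 * \<eta> * lam\<^sup>2 * margin * sqrt (Y k \<omega>))
     \<le> 1 - margin\<^sup>2 / 60"
    using band_inequalities(2,3)[of "Y k \<omega>"] unfolding alo_def bhi_def by auto
qed

lemma u_Suc:
  "u (Suc k) \<omega> = lam *\<^sub>R (u k \<omega> - sign (u k \<omega> \<bullet> a k \<omega> + lam ^ k / G * eps k \<omega>) *\<^sub>R a k \<omega>)"
proof -
  define xk where "xk = sgd_iter G lam a y k \<omega>"
  define \<sigma> where "\<sigma> = sign (u k \<omega> \<bullet> a k \<omega> + lam ^ k / G * eps k \<omega>)"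
  have pos: "0 < G / lam ^ k"
    using G lam by simp
  have "y k \<omega> - xk \<bullet> a k \<omega> = G / lam ^ k * (u k \<omega> \<bullet> a k \<omega> + lam ^ k / G * eps k \<omega>)"
    unfolding u_def xk_def using G lam by (simp add: y_def inner_diff_left field_simps)
  then have \<sigma>_eq: "sign (y k \<omega> - xk \<bullet> a k \<omega>) = \<sigma>"
    unfolding \<sigma>_def using sign_mult_pos[OF pos] by simp
  have "u (Suc k) \<omega> = (lam ^ Suc k / G) *\<^sub>R (x - xk) - (lam ^ Suc k / G * (G / lam ^ k * \<sigma>)) *\<^sub>R a k \<omega>"
    unfolding u_def using \<sigma>_eq by (simp add: xk_def scaleR_diff_right algebra_simps)
  also have "\<dots> = lam *\<^sub>R (u k \<omega> - \<sigma> *\<^sub>R a k \<omega>)"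
    unfolding u_def xk_def using G lam by (simp add: scaleR_diff_right field_simps)
  finally show ?thesis
    unfolding \<sigma>_def .
qed

lemma Y_Suc:
  assumes "\<omega> \<in> space M"
  shows "Y (Suc k) \<omega> = lam\<^sup>2 * (Y k \<omega> - 2 * (u k \<omega> \<bullet> a k \<omega>)
            * sign (u k \<omega> \<bullet> a k \<omega> + lam ^ k / G * eps k \<omega>) + 1)"
proof -
  define \<sigma> where "\<sigma> = sign (u k \<omega> \<bullet> a k \<omega> + lam ^ k / G * eps k \<omega>)"
  have "(norm (u k \<omega> - \<sigma> *\<^sub>R a k \<omega>))\<^sup>2 = Y k \<omega> - 2 * (u k \<omega> \<bullet> a k \<omega>) * \<sigma> + \<sigma> * \<sigma> * (norm (a k \<omega>))\<^sup>2"
    unfolding Y_eq power2_norm_eq_inner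
    by (simp add: inner_diff_left inner_diff_right inner_commute algebra_simps)
  then show ?thesis
    unfolding Y_eq[of "Suc k"] u_Suc \<sigma>_def[symmetric]
    using a_unit[OF assms] sign_sq[of "u k \<omega> \<bullet> a k \<omega> + lam ^ k / G * eps k \<omega>"]
    by (simp add: power_mult_distrib \<sigma>_def)
qed

lemma Y_Suc_le:
  assumes "\<omega> \<in> space M"
  shows "Y (Suc k) \<omega> \<le> lam\<^sup>2 * (Y k \<omega> + 1) + 2 * lam\<^sup>2 * ((2 * \<xi> k \<omega> - 1) * \<bar>u k \<omega> \<bullet> a k \<omega>\<bar>)"
proof -
  define Z where "Z = u k \<omega> \<bullet> a k \<omega>"
  have "- (Z * sign (Z + lam ^ k / G * eps k \<omega>)) \<le> (2 * \<xi> k \<omega> - 1) * \<bar>Z\<bar>"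
  proof (cases "\<xi> k \<omega> = 0")
    case True
    \<comment> \<open>without corruption the sign step points towards the target\<close>
    then show ?thesis
      using sign_mult_self[of Z] by (simp add: eps_def mult.commute)
  next
    case False
    then have "\<xi> k \<omega> = 1"
      using \<xi>_ind[OF assms, of k] by simp
    then show ?thesis
      using neg_sign_mult_le_abs[of _ Z] by (simp add: mult.commute)
  qed
  then have "2 * lam\<^sup>2 * (- (Z * sign (Z + lam ^ k / G * eps k \<omega>)))
      \<le> 2 * lam\<^sup>2 * ((2 * \<xi> k \<omega> - 1) * \<bar>Z\<bar>)"
    by (rule mult_left_mono) simp
  moreover have "Y (Suc k) \<omega>
      = lam\<^sup>2 * (Y k \<omega> + 1) + 2 * lam\<^sup>2 * (- (Z * sign (Z + lam ^ k / G * eps k \<omega>)))"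
    unfolding Y_Suc[OF assms] Z_def by (simp add: algebra_simps)
  ultimately show ?thesis
    unfolding Z_def by linarith
qed

lemma space_F [simp]: "space (F k) = space M"
  by (simp add: F_def)

lemma subalgebra_F: "subalgebra M (F k)"
  unfolding F_def by (intro subalgebra_filt a_meas eps_measurable)

lemma measurable_F_M: "f \<in> measurable (F k) N \<Longrightarrow> f \<in> measurable M N"
  using subalgebra_F by (rule measurable_from_subalg)

lemma u_measurable_F [measurable]: "u k \<in> borel_measurable (F k)"
proof -
  have [measurable]: "a j \<in> borel_measurable (F k)" "eps j \<in> borel_measurable (F k)" if "j < k" for j
    unfolding F_def using that by (rule filt_measurable)+
  have "y j \<in> borel_measurable (F k)" if "j < k" for j
    unfolding y_def using that by measurable
  then have [measurable]: "sgd_iter G lam a y k \<in> borel_measurable (F k)"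
    by (intro sgd_iter_measurable) auto
  show ?thesis
    unfolding u_def[abs_def] by measurable
qed

lemma Y_measurable_F [measurable]: "Y k \<in> borel_measurable (F k)"
  unfolding Y_eq[abs_def] by measurable

lemma band_measurable [measurable]: "{\<omega> \<in> space (F k). \<omega> \<in> band k} \<in> sets (F k)"
  unfolding band_def mem_Collect_eq by measurable

lemma u_band_measurable_F [measurable]: "u_band k \<in> borel_measurable (F k)"
  unfolding u_band_def[abs_def] by measurable

definition band_exp :: "nat \<Rightarrow> 'a \<Rightarrow> real" where
  "band_exp k \<omega> = indicator (band k) \<omega> * exp (\<eta> * ((lam\<^sup>2 - 1) * Y k \<omega> + lam\<^sup>2))"

definition drift_const :: "nat \<Rightarrow> 'a \<Rightarrow> real" where
  "drift_const k \<omega> = band_exp k \<omega> * (1 + 5 / 2 * \<eta>\<^sup>2 * (lam\<^sup>2)\<^sup>2 * Y k \<omega>)"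

definition drift_coeff :: "nat \<Rightarrow> 'a \<Rightarrow> real" where
  "drift_coeff k \<omega> = band_exp k \<omega> * (2 * \<eta> * lam\<^sup>2)"

definition signed_proj :: "nat \<Rightarrow> 'a \<Rightarrow> real" where
  "signed_proj k \<omega> = (2 * \<xi> k \<omega> - 1) * \<bar>u_band k \<omega> \<bullet> a k \<omega>\<bar>"

lemma abs_noise_sign: "\<omega> \<in> space M \<Longrightarrow> \<bar>2 * \<xi> k \<omega> - 1\<bar> = 1"
  using \<xi>_ind[of \<omega> k] by auto

lemma abs_inner_unit_le: "\<omega> \<in> space M \<Longrightarrow> \<bar>v \<bullet> a k \<omega>\<bar> \<le> norm v"
  using Cauchy_Schwarz_ineq2[of v "a k \<omega>"] a_unit[of \<omega> k] by simp

lemma exp_drift_le_affine: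
  assumes \<omega>: "\<omega> \<in> space M"
  shows "exp (\<eta> * (Y (Suc k) \<omega> - Y k \<omega>)) * indicator (band k) \<omega>
    \<le> drift_const k \<omega> + drift_coeff k \<omega> * signed_proj k \<omega>"
proof (cases "\<omega> \<in> band k")
  case True
  define Z where "Z = u k \<omega> \<bullet> a k \<omega>"
  define base where "base = \<eta> * ((lam\<^sup>2 - 1) * Y k \<omega> + lam\<^sup>2)"
  define \<tau> where "\<tau> = 2 * \<eta> * lam\<^sup>2 * ((2 * \<xi> k \<omega> - 1) * \<bar>Z\<bar>)"
  have Z_le: "\<bar>Z\<bar> \<le> sqrt (Y k \<omega>)"
    unfolding Z_def Y_eq using abs_inner_unit_le[OF \<omega>] by simp
  have \<tau>_abs: "\<bar>\<tau>\<bar> = 2 * \<eta> * lam\<^sup>2 * \<bar>Z\<bar>"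
    unfolding \<tau>_def using eta_nonneg abs_noise_sign[OF \<omega>] by (simp add: abs_mult)
  have "\<bar>\<tau>\<bar> \<le> 2 * \<eta> * lam\<^sup>2 * sqrt (Y k \<omega>)"
    unfolding \<tau>_abs using Z_le eta_nonneg by (intro mult_left_mono) auto
  then have \<tau>_small: "\<bar>\<tau>\<bar> \<le> 1 / 5" and \<tau>_sq: "\<tau>\<^sup>2 \<le> 4 * \<eta>\<^sup>2 * (lam\<^sup>2)\<^sup>2 * Y k \<omega>"
    using band_numeric(1)[OF True] power_mono[of "\<bar>\<tau>\<bar>" "2 * \<eta> * lam\<^sup>2 * sqrt (Y k \<omega>)" 2]
      Y_nonneg[of k \<omega>]
    by (auto simp: power_mult_distrib)
  have "\<eta> * (Y (Suc k) \<omega> - Y k \<omega>) \<le> \<eta> * (lam\<^sup>2 * (Y k \<omega> + 1) + 2 * lam\<^sup>2 * ((2 * \<xi> k \<omega> - 1) * \<bar>Z\<bar>) - Y k \<omega>)"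
    unfolding Z_def using Y_Suc_le[OF \<omega>] eta_nonneg by (intro mult_left_mono) auto
  also have "\<dots> = base + \<tau>"
    unfolding base_def \<tau>_def by (simp add: algebra_simps)
  finally have "exp (\<eta> * (Y (Suc k) \<omega> - Y k \<omega>)) \<le> exp base * exp \<tau>"
    by (simp add: exp_add[symmetric])
  also have "\<dots> \<le> exp base * (1 + \<tau> + 5 / 8 * \<tau>\<^sup>2)"
    using exp_le_quadratic[OF \<tau>_small] by (intro mult_left_mono) auto
  also have "\<dots> \<le> exp base * (1 + \<tau> + 5 / 2 * \<eta>\<^sup>2 * (lam\<^sup>2)\<^sup>2 * Y k \<omega>)"
    by (intro mult_left_mono) (use \<tau>_sq in linarith, simp)
  also have "\<dots> = drift_const k \<omega> + drift_coeff k \<omega> * signed_proj k \<omega>"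
    using True unfolding drift_const_def drift_coeff_def signed_proj_def band_exp_def u_band_def
      base_def \<tau>_def Z_def by (simp add: algebra_simps)
  finally show ?thesis
    using True by simp
qed (simp add: drift_const_def drift_coeff_def band_exp_def)

lemma band_exp_measurable_F [measurable]: "band_exp k \<in> borel_measurable (F k)"
  unfolding band_exp_def[abs_def] by measurable

lemma drift_const_measurable_F [measurable]: "drift_const k \<in> borel_measurable (F k)"
  unfolding drift_const_def[abs_def] by measurable

lemma drift_coeff_measurable_F [measurable]: "drift_coeff k \<in> borel_measurable (F k)"
  unfolding drift_coeff_def[abs_def] by measurable

lemma drift_const_measurable [measurable]: "drift_const k \<in> borel_measurable M"
  by (rule measurable_F_M) measurable

lemma drift_coeff_measurable [measurable]: "drift_coeff k \<in> borel_measurable M"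
  by (rule measurable_F_M) measurable

lemma norm_u_band_le: "norm (u_band k \<omega>) \<le> sqrt bhi"
proof (cases "\<omega> \<in> band k")
  case True
  then have "(norm (u k \<omega>))\<^sup>2 < bhi"
    by (simp add: band_def Y_eq)
  then have "norm (u k \<omega>) < sqrt bhi"
    by (rule real_less_rsqrt)
  then show ?thesis
    using True by (simp add: u_band_def)
qed (simp add: u_band_def less_imp_le[OF bhi_pos])

lemma abs_u_band_inner_le: "\<omega>' \<in> space M \<Longrightarrow> \<bar>u_band k \<omega> \<bullet> a j \<omega>'\<bar> \<le> sqrt bhi"
  using abs_inner_unit_le norm_u_band_le by (rule order_trans)

lemma u_band_measurable [measurable]: "u_band k \<in> borel_measurable M"
  by (rule measurable_F_M) measurable

lemma band_exp_bounds: "0 \<le> band_exp k \<omega>" "band_exp k \<omega> \<le> exp (\<eta> * ((lam\<^sup>2 - 1) * bhi + lam\<^sup>2))"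
proof -
  have "\<eta> * ((lam\<^sup>2 - 1) * Y k \<omega> + lam\<^sup>2) \<le> \<eta> * ((lam\<^sup>2 - 1) * bhi + lam\<^sup>2)" if "\<omega> \<in> band k"
    using that eta_nonneg lam_lo by (intro mult_left_mono) (auto simp: band_def)
  then show "0 \<le> band_exp k \<omega>" "band_exp k \<omega> \<le> exp (\<eta> * ((lam\<^sup>2 - 1) * bhi + lam\<^sup>2))"
    by (auto simp: band_exp_def indicator_def)
qed

lemma integrable_drift_const: "integrable M (drift_const k)"
proof (rule integrable_const_bound)
  show "AE \<omega> in M. norm (drift_const k \<omega>) \<le>
      exp (\<eta> * ((lam\<^sup>2 - 1) * bhi + lam\<^sup>2)) * (1 + 5 / 2 * \<eta>\<^sup>2 * (lam\<^sup>2)\<^sup>2 * bhi)"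
  proof (intro AE_I2)
    fix \<omega>
    have "1 + 5 / 2 * \<eta>\<^sup>2 * (lam\<^sup>2)\<^sup>2 * Y k \<omega> \<le> 1 + 5 / 2 * \<eta>\<^sup>2 * (lam\<^sup>2)\<^sup>2 * bhi"
      if "\<omega> \<in> band k"
    proof -
      have "5 / 2 * \<eta>\<^sup>2 * (lam\<^sup>2)\<^sup>2 * Y k \<omega> \<le> 5 / 2 * \<eta>\<^sup>2 * (lam\<^sup>2)\<^sup>2 * bhi"
        using that by (intro mult_left_mono) (auto simp: band_def)
      then show ?thesis
        by linarith
    qed
    then show "norm (drift_const k \<omega>) \<le>
        exp (\<eta> * ((lam\<^sup>2 - 1) * bhi + lam\<^sup>2)) * (1 + 5 / 2 * \<eta>\<^sup>2 * (lam\<^sup>2)\<^sup>2 * bhi)"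
      using band_exp_bounds[of k \<omega>] Y_nonneg[of k \<omega>] bhi_pos
      by (cases "\<omega> \<in> band k") (auto simp: drift_const_def band_exp_def intro!: mult_mono)
  qed
qed measurable

lemma signed_proj_bound: "\<omega> \<in> space M \<Longrightarrow> \<bar>signed_proj k \<omega>\<bar> \<le> sqrt bhi"
  using abs_u_band_inner_le[of \<omega> k \<omega> k] abs_noise_sign[of \<omega> k]
  by (simp add: signed_proj_def abs_mult)

lemma signed_proj_measurable [measurable]: "signed_proj k \<in> borel_measurable M"
  unfolding signed_proj_def[abs_def] by measurable

lemma integrable_drift_coeff_signed_proj: "integrable M (\<lambda>\<omega>. drift_coeff k \<omega> * signed_proj k \<omega>)"
proof (rule integrable_const_bound)
  show "AE \<omega> in M. norm (drift_coeff k \<omega> * signed_proj k \<omega>) \<le>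
      exp (\<eta> * ((lam\<^sup>2 - 1) * bhi + lam\<^sup>2)) * (2 * \<eta> * lam\<^sup>2) * sqrt bhi"
  proof (intro AE_I2)
    fix \<omega> assume "\<omega> \<in> space M"
    then show "norm (drift_coeff k \<omega> * signed_proj k \<omega>) \<le>
        exp (\<eta> * ((lam\<^sup>2 - 1) * bhi + lam\<^sup>2)) * (2 * \<eta> * lam\<^sup>2) * sqrt bhi"
      using band_exp_bounds[of k \<omega>] signed_proj_bound eta_nonneg
      by (auto simp: drift_coeff_def abs_mult intro!: mult_mono)
  qed
qed measurable

lemma expectation_noise_sign: "expectation (\<lambda>\<omega>. 2 * \<xi> k \<omega> - 1) = 2 * p - 1"
proof -
  have "\<bar>\<xi> k \<omega>\<bar> \<le> 1" if "\<omega> \<in> space M" for \<omega>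
    using \<xi>_ind[OF that, of k] by auto
  then have "integrable M (\<xi> k)"
    by (intro integrable_const_bound[where B=1] AE_I2) auto
  moreover have "expectation (\<xi> k) = p"
  proof -
    have "expectation (\<xi> k) = expectation (indicator {\<omega> \<in> space M. \<xi> k \<omega> = 1})"
      using \<xi>_ind by (intro Bochner_Integration.integral_cong) (auto simp: indicator_def)
    then show ?thesis
      using \<xi>_prob[of k] by simp
  qed
  ultimately show ?thesis
    by (simp add: prob_space)
qed

lemma cond_exp_abs_proj:
  "AE \<omega> in M. real_cond_exp M (F k) (\<lambda>\<omega>. \<bar>u_band k \<omega> \<bullet> a k \<omega>\<bar>) \<omega>
     = (\<integral>v. \<bar>u_band k \<omega> \<bullet> v\<bar> \<partial>distr M borel (a k))"
  using abs_u_band_inner_le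
    real_cond_exp_indep_integral[OF subalgebra_F a_indep_F[of k, folded sets_gen_sigma] space_gen_sigma
      u_band_measurable_F measurable_gen_sigma, of "\<lambda>(v, t). \<bar>v \<bullet> t\<bar>" "sqrt bhi"]
  by simp

definition rest_sigma :: "nat \<Rightarrow> 'a measure" where
  "rest_sigma k = sigma (space M)
     ((\<Union>j. gen_sets M (a j) \<union> gen_sets M (\<nu> j)) \<union> (\<Union>j\<in>UNIV - {k}. gen_sets M (\<xi> j)))"

lemma space_rest_sigma [simp]: "space (rest_sigma k) = space M"
  unfolding rest_sigma_def by (simp add: space_measure_of_conv)

lemma rest_sigma_measurable:
  shows "a j \<in> borel_measurable (rest_sigma k)" "\<nu> j \<in> borel_measurable (rest_sigma k)"
    and "j \<noteq> k \<Longrightarrow> \<xi> j \<in> borel_measurable (rest_sigma k)"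
proof -
  have "(\<Union>j. gen_sets M (a j) \<union> gen_sets M (\<nu> j)) \<union> (\<Union>j\<in>UNIV - {k}. gen_sets M (\<xi> j))
      \<subseteq> Pow (space M)"
    by (simp add: UN_subset_iff gen_sets_subset_Pow)
  note gen = measurable_sigma_gen_sets[OF _ this, folded rest_sigma_def]
  show "a j \<in> borel_measurable (rest_sigma k)" "\<nu> j \<in> borel_measurable (rest_sigma k)"
    by (rule gen; blast)+
  show "j \<noteq> k \<Longrightarrow> \<xi> j \<in> borel_measurable (rest_sigma k)"
    by (rule gen) blast
qed

lemma indep_noise_rest: "indep_set (sets (gen_sigma M (\<xi> k))) (sets (rest_sigma k))"
proof -
  have "sets (rest_sigma k) = sigma_sets (space M)
      ((\<Union>j. gen_sets M (a j) \<union> gen_sets M (\<nu> j)) \<union> (\<Union>j\<in>UNIV - {k}. gen_sets M (\<xi> j)))"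
    unfolding rest_sigma_def by (rule sets_measure_of) (simp add: UN_subset_iff gen_sets_subset_Pow)
  then show ?thesis
    using \<xi>_indep[of k] by (simp add: sets_gen_sigma)
qed

lemma sets_F_subset_rest: "sets (F k) \<subseteq> sets (rest_sigma k)"
  unfolding F_def
proof (rule sets_filt_subset)
  fix j assume "j < k"
  then have [measurable]: "\<xi> j \<in> borel_measurable (rest_sigma k)" "\<nu> j \<in> borel_measurable (rest_sigma k)"
    by (simp_all add: rest_sigma_measurable)
  show "eps j \<in> borel_measurable (rest_sigma k)"
    unfolding eps_def by measurable
qed (simp_all add: rest_sigma_measurable)

lemma cond_exp_signed_proj:
  "AE \<omega> in M. real_cond_exp M (F k) (signed_proj k) \<omega>
     = (2 * p - 1) * (\<integral>v. \<bar>u_band k \<omega> \<bullet> v\<bar> \<partial>distr M borel (a k))"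
proof -
  have [measurable]: "\<xi> k \<in> borel_measurable (gen_sigma M (\<xi> k))" "a k \<in> borel_measurable (rest_sigma k)"
    by (simp_all add: measurable_gen_sigma rest_sigma_measurable)
  have [measurable]: "u_band k \<in> borel_measurable (rest_sigma k)"
    using sets_F_subset_rest by (intro borel_measurable_subalgebra[OF _ _ u_band_measurable_F]) simp_all
  have int_sign: "integrable M (\<lambda>\<omega>. 2 * \<xi> k \<omega> - 1)"
    using abs_noise_sign by (intro integrable_const_bound[where B=1] AE_I2) auto
  have int_proj: "integrable M (\<lambda>\<omega>. \<bar>u_band k \<omega> \<bullet> a k \<omega>\<bar>)"
    using abs_u_band_inner_le by (intro integrable_const_bound[where B="sqrt bhi"] AE_I2) auto
  have "AE \<omega> in M. real_cond_exp M (F k) (signed_proj k) \<omega>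
      = expectation (\<lambda>\<omega>. 2 * \<xi> k \<omega> - 1) * real_cond_exp M (F k) (\<lambda>\<omega>. \<bar>u_band k \<omega> \<bullet> a k \<omega>\<bar>) \<omega>"
    unfolding signed_proj_def[abs_def]
    by (rule real_cond_exp_mult_indep[OF subalgebra_F indep_noise_rest space_gen_sigma space_rest_sigma
          sets_F_subset_rest _ int_sign _ int_proj]; measurable)
  then show ?thesis
    using cond_exp_abs_proj[of k] unfolding expectation_noise_sign by eventually_elim simp
qed

lemma affine_bound_le:
  "AE \<omega> in M. drift_const k \<omega>
      + drift_coeff k \<omega> * ((2 * p - 1) * (\<integral>v. \<bar>u_band k \<omega> \<bullet> v\<bar> \<partial>distr M borel (a k)))
    \<le> 1 - margin\<^sup>2 / 60"
  using small_ball[OF u_band_measurable_F[of k]]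
proof eventually_elim
  case (elim \<omega>)
  define I where "I = (\<integral>v. \<bar>u_band k \<omega> \<bullet> v\<bar> \<partial>distr M borel (a k))"
  show ?case
  proof (cases "\<omega> \<in> band k")
    case True
    have norm_u_band: "norm (u_band k \<omega>) = sqrt (Y k \<omega>)"
      using True by (simp add: u_band_def Y_eq)
    have "(1 - 2 * p) * (Ct * sqrt (Y k \<omega>) / sqrt d) \<le> (1 - 2 * p) * I"
      using elim p unfolding I_def norm_u_band by (intro mult_left_mono) auto
    then have "(2 * p - 1) * I \<le> - (margin * sqrt (Y k \<omega>))"
      unfolding margin_def by (simp add: algebra_simps)
    then have "drift_coeff k \<omega> * ((2 * p - 1) * I) \<le> drift_coeff k \<omega> * (- (margin * sqrt (Y k \<omega>)))"
      using band_exp_bounds(1) eta_nonneg by (intro mult_left_mono) (auto simp: drift_coeff_def)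
    moreover have "drift_const k \<omega> + drift_coeff k \<omega> * (- (margin * sqrt (Y k \<omega>)))
        = exp (\<eta> * ((lam\<^sup>2 - 1) * Y k \<omega> + lam\<^sup>2))
          * (1 + 5 / 2 * \<eta>\<^sup>2 * (lam\<^sup>2)\<^sup>2 * Y k \<omega> - 2 * \<eta> * lam\<^sup>2 * margin * sqrt (Y k \<omega>))"
      using True by (simp add: drift_const_def drift_coeff_def band_exp_def algebra_simps)
    ultimately show ?thesis
      using band_numeric(2)[OF True] unfolding I_def by linarith
  next
    case False
    then show ?thesis
      using margin_bounds(3) by (simp add: drift_const_def drift_coeff_def band_exp_def)
  qed
qed

lemma integrable_exp_drift:
  "integrable M (\<lambda>\<omega>. exp (\<eta> * (Y (Suc k) \<omega> - Y k \<omega>)) * indicator (band k) \<omega>)"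
proof (rule Bochner_Integration.integrable_bound)
  show "integrable M (\<lambda>\<omega>. drift_const k \<omega> + drift_coeff k \<omega> * signed_proj k \<omega>)"
    using integrable_drift_const integrable_drift_coeff_signed_proj by (rule Bochner_Integration.integrable_add)
  have [measurable]: "Y j \<in> borel_measurable M" for j
    by (rule measurable_F_M) measurable
  have "{\<omega> \<in> space M. \<omega> \<in> band k} \<in> sets M"
    using band_measurable[of k] subalgebra_F by (auto simp: subalgebra_def)
  then show "(\<lambda>\<omega>. exp (\<eta> * (Y (Suc k) \<omega> - Y k \<omega>)) * indicator (band k) \<omega>) \<in> borel_measurable M"
    by measurable
  show "AE \<omega> in M. norm (exp (\<eta> * (Y (Suc k) \<omega> - Y k \<omega>)) * indicator (band k) \<omega>)
      \<le> norm (drift_const k \<omega> + drift_coeff k \<omega> * signed_proj k \<omega>)"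
  proof (rule AE_I2)
    fix \<omega> assume \<omega>: "\<omega> \<in> space M"
    have "0 \<le> exp (\<eta> * (Y (Suc k) \<omega> - Y k \<omega>)) * indicator (band k) \<omega>"
      by simp
    then show "norm (exp (\<eta> * (Y (Suc k) \<omega> - Y k \<omega>)) * indicator (band k) \<omega>)
        \<le> norm (drift_const k \<omega> + drift_coeff k \<omega> * signed_proj k \<omega>)"
      using exp_drift_le_affine[OF \<omega>, of k]
        abs_ge_self[of "drift_const k \<omega> + drift_coeff k \<omega> * signed_proj k \<omega>"]
      by (simp only: real_norm_def abs_of_nonneg)
  qed
qed

lemma cond_exp_drift_le:
  "AE \<omega> in M.
     real_cond_exp M (F k)
       (\<lambda>\<omega>. exp (\<eta> * (Y (Suc k) \<omega> - Y k \<omega>)) * indicator {\<omega>. alo \<le> Y k \<omega> \<and> Y k \<omega> < bhi} \<omega>) \<omega>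
     \<le> 1 - Ct\<^sup>2 * (1 - 2 * p)\<^sup>2 / (60 * d)"
proof -
  have "AE \<omega> in M. real_cond_exp M (F k) (\<lambda>\<omega>. exp (\<eta> * (Y (Suc k) \<omega> - Y k \<omega>)) * indicator (band k) \<omega>) \<omega>
      \<le> 1 - margin\<^sup>2 / 60"
    by (rule real_cond_exp_le_of_affine_bound[OF subalgebra_F integrable_exp_drift exp_drift_le_affine
          drift_const_measurable_F integrable_drift_const drift_coeff_measurable_F
          integrable_drift_coeff_signed_proj signed_proj_measurable cond_exp_signed_proj
          affine_bound_le])
  then show ?thesis
    unfolding band_def margin_bounds(4) by (simp add: mult.commute)
qed

end

theorem lemma4p1:
  fixes M :: "'a measure"
    and x :: "real^'n"
    and a :: "nat \<Rightarrow> 'a \<Rightarrow> real^'n"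
    and \<xi> \<nu> :: "nat \<Rightarrow> 'a \<Rightarrow> real"
    and p G lam Ct :: real
  defines "d \<equiv> real CARD('n)"
  defines "eps \<equiv> (\<lambda>k \<omega>. \<xi> k \<omega> * \<nu> k \<omega>)"
  defines "y \<equiv> (\<lambda>k \<omega>. x \<bullet> a k \<omega> + eps k \<omega>)"
  defines "F \<equiv> filt M a eps"
  defines "Y \<equiv> (\<lambda>k \<omega>. (norm ((lam ^ k / G) *\<^sub>R (x - sgd_iter G lam a y k \<omega>)))\<^sup>2)"
  defines "alo \<equiv> 1 / (2 * (lam\<^sup>2 - 1))"
  defines "bhi \<equiv> 3 / (2 * (lam\<^sup>2 - 1))"
  defines "cstar \<equiv> 1 / (8 * lam\<^sup>2) *
            (sqrt 2 * lam\<^sup>2 * (1 - 2 * p) * Ct / sqrt d - sqrt (lam\<^sup>2 - 1) * (3 / 2 + lam\<^sup>2))"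
  defines "\<eta> \<equiv> cstar * sqrt (lam\<^sup>2 - 1)"
  assumes M: "prob_space M"
    and p: "0 \<le> p" "p < 1 / 2"
    and G: "G > 0" and lam: "lam > 0" and Ct: "Ct > 0"
    and a_meas: "\<And>k. a k \<in> borel_measurable M"
    and \<xi>_meas: "\<And>k. \<xi> k \<in> borel_measurable M"
    and \<nu>_meas: "\<And>k. \<nu> k \<in> borel_measurable M"
    and \<xi>_ind: "\<And>k \<omega>. \<omega> \<in> space M \<Longrightarrow> \<xi> k \<omega> \<in> {0, 1}"
    and \<xi>_prob: "\<And>k. measure M {\<omega> \<in> space M. \<xi> k \<omega> = 1} = p"
    and \<xi>_indep: "\<And>k. prob_space.indep_set M (sigma_sets (space M) (gen_sets M (\<xi> k)))
          (sigma_sets (space M) ((\<Union>j. gen_sets M (a j) \<union> gen_sets M (\<nu> j))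
                                 \<union> (\<Union>j\<in>UNIV - {k}. gen_sets M (\<xi> j))))"
    and a_unit: "\<And>k \<omega>. \<omega> \<in> space M \<Longrightarrow> norm (a k \<omega>) = 1"
    and a_indep_F: "\<And>k. prob_space.indep_set M (sigma_sets (space M) (gen_sets M (a k))) (sets (F k))"
    and a_iid_indep: "prob_space.indep_vars M (\<lambda>_. borel) (\<lambda>k \<omega>. sqrt d *\<^sub>R a k \<omega>) UNIV"
    and a_iid_dist: "\<And>k. distr M borel (\<lambda>\<omega>. sqrt d *\<^sub>R a k \<omega>) = distr M borel (\<lambda>\<omega>. sqrt d *\<^sub>R a 0 \<omega>)"
    and a_mean: "\<And>k. integral\<^sup>L M (\<lambda>\<omega>. sqrt d *\<^sub>R a k \<omega>) = 0"
    and a_iso: "\<And>k i j. integral\<^sup>L M (\<lambda>\<omega>. (sqrt d *\<^sub>R a k \<omega>) $ i * (sqrt d *\<^sub>R a k \<omega>) $ j)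
                        = (if i = j then 1 else 0)"
    and small_ball: "\<And>k (u :: 'a \<Rightarrow> real^'n). u \<in> borel_measurable (F k) \<Longrightarrow>
          AE \<omega> in M. (\<integral>v. \<bar>u \<omega> \<bullet> v\<bar> \<partial>(distr M borel (a k))) \<ge> Ct * norm (u \<omega>) / sqrt d"
    and lam_lo: "1 < lam\<^sup>2"
    and lam_hi: "lam\<^sup>2 \<le> 1 + Ct\<^sup>2 * (1 - 2 * p)\<^sup>2 / (9 * d)"
    and lam_hi2: "1 + Ct\<^sup>2 * (1 - 2 * p)\<^sup>2 / (9 * d) < 50 / 49"
  shows "AE \<omega> in M.
           real_cond_exp M (F k)
             (\<lambda>\<omega>. exp (\<eta> * (Y (Suc k) \<omega> - Y k \<omega>)) * indicator {\<omega>. alo \<le> Y k \<omega> \<and> Y k \<omega> < bhi} \<omega>) \<omega>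
           \<le> 1 - Ct\<^sup>2 * (1 - 2 * p)\<^sup>2 / (60 * d)"
proof -
  interpret massart_sgd M x a \<xi> \<nu> p G lam Ct d eps y F Y alo bhi cstar \<eta>
    by (rule massart_sgd.intro)
      (fact assms | simp add: d_def eps_def y_def F_def Y_def alo_def bhi_def cstar_def \<eta>_def)+
  show ?thesis
    by (rule cond_exp_drift_le)
qed

end
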